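(* Assume the one-hidden-neuron setting described in the context, let $\Theta=(\Theta_t)_{t\in[0,\infty)}\in C([0,\infty),\mathbb{R}^4)$ satisfy $\Theta_t=\Theta_0-\int_0^t\mathcal{G}(\Theta_s)\,\mathrm{d}s$ for all $t\in[0,\infty)$, write $\Theta_t=(w_t,b_t,v_t,c_t)$, let $m=\rho\int_{\mathscr{a}}^{\mathscr{b}}\big(f(x)-(\mathscr{b}-\mathscr{a})^{-1}\int_{\mathscr{a}}^{\mathscr{b}}f(y)\,\mathrm{d}y\big)^2\,\mathrm{d}x$, and assume $\mathcal{L}(\Theta_0)<m$. Then (i) $\sup_{t\in[0,\infty)}|w_tv_t|<\infty$; (ii) $\sup_{t\in[0,\infty)}|w_t|\le\big[\sup_{t\in[0,\infty)}\max\{1,|w_0|^2+|b_0|^2-|v_0|^2+|w_tv_t|^2\}\big]^{1/2}<\infty$; (iii) for all $t\in[0,\infty)$: $\sup_{x\in[\mathscr{a},\mathscr{b}]}|\mathscr{N}^{\Theta_t}(x)|\le2\big[\sup_{x\in[\mathscr{a},\mathscr{b}]}|f(x)|\big]+(\mathscr{b}-\mathscr{a})|w_tv_t|<\infty$; (iv) for all $\alpha,\beta\in\mathbb{R}$ with $f(x)=\alpha x+\beta$ for all $x\in[\mathscr{a},\mathscr{b}]$ it holds that $\inf_{t\in[0,\infty)}\alpha w_tv_t>0$.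
   Context: One-hidden-neuron setting: $\mathscr{a}\in\mathbb{R}$, $\mathscr{b}\in(\mathscr{a},\infty)$, $\rho\in(0,\infty)$, $f\in C([\mathscr{a},\mathscr{b}],\mathbb{R})$. For $\theta=(\theta_1,\theta_2,\theta_3,\theta_4)\in\mathbb{R}^4$ and $x\in\mathbb{R}$ let $\mathscr{N}^\theta(x)=\theta_3\max\{\theta_1x+\theta_2,0\}+\theta_4$ and $\mathcal{L}(\theta)=\rho\int_{\mathscr{a}}^{\mathscr{b}}(\mathscr{N}^\theta(y)-f(y))^2\,\mathrm{d}y$. Let $\mathfrak{R}_r\in C^1(\mathbb{R},\mathbb{R})$, $r\in\mathbb{N}$, satisfy for all $x\in\mathbb{R}$ that $\lim_{r\to\infty}\big(|\mathfrak{R}_r(x)-\max\{x,0\}|+|(\mathfrak{R}_r)'(x)-\mathbb{1}_{(0,\infty)}(x)|\big)=0$ and $\sup_{r\in\mathbb{N}}\sup_{y\in[-|x|,|x|]}(|\mathfrak{R}_r(y)|+|(\mathfrak{R}_r)'(y)|)<\infty$; for $r\in\mathbb{N}$ let $\mathfrak{L}_r(\theta)=\rho\int_{\mathscr{a}}^{\mathscr{b}}(\theta_3\mathfrak{R}_r(\theta_1x+\theta_2)+\theta_4-f(x))^2\,\mathrm{d}x$, and let $\mathcal{G}\colon\mathbb{R}^4\to\mathbb{R}^4$ satisfy $\mathcal{G}(\theta)=\lim_{r\to\infty}(\nabla\mathfrak{L}_r)(\theta)$ for every $\theta$ for which this limit exists ($\mathcal{G}$ is locally bounded and measurable). *)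

theory Defs
  imports "HOL-Analysis.Analysis"
begin

definition realiz :: "real^4 \<Rightarrow> real \<Rightarrow> real" where
  "realiz \<theta> x = \<theta>$3 * max (\<theta>$1 * x + \<theta>$2) 0 + \<theta>$4"

definition loss :: "real \<Rightarrow> real \<Rightarrow> real \<Rightarrow> (real \<Rightarrow> real) \<Rightarrow> real^4 \<Rightarrow> real" where
  "loss \<rho> a b f \<theta> = \<rho> * integral {a..b} (\<lambda>y. (realiz \<theta> y - f y)^2)"

definition loss_act :: "(real \<Rightarrow> real) \<Rightarrow> real \<Rightarrow> real \<Rightarrow> real \<Rightarrow> (real \<Rightarrow> real) \<Rightarrow> real^4 \<Rightarrow> real" where
  "loss_act R \<rho> a b f \<theta> = \<rho> * integral {a..b} (\<lambda>x. (\<theta>$3 * R (\<theta>$1 * x + \<theta>$2) + \<theta>$4 - f x)^2)"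

definition grad :: "(real^4 \<Rightarrow> real) \<Rightarrow> real^4 \<Rightarrow> real^4" where
  "grad F \<theta> = (THE D. GDERIV F \<theta> :> D)"

end

theory Submission
  imports Defs
begin

text \<open>
  First, dominated convergence identifies \<open>G\<close> with the integral of the
  pointwise gradient in which the smoothed activation is replaced by the ReLU and its derivative by
  the Heaviside function. Since \<open>max z 0 = z * 1(z > 0)\<close>, this gradient is orthogonal to the
  gradient of \<open>w^2 + b^2 - v^2\<close>, which is therefore conserved along the flow. Second, the chain rule
  holds along the absolutely continuous curve \<open>\<Theta>\<close> for every smoothed loss; in the limit it shows
  that the loss decreases by the integral of \<open>|G(\<Theta> s)|^2\<close>. Third, a single network whose squared
  error is below that of the best constant fit has a bounded slope \<open>w v\<close>: it is constant on one
  piece of \<open>[a, b]\<close> and affine with slope \<open>w v\<close> on the other, its \<open>L^2\<close> norm is controlled by its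
  error, and the error of that constant on the first piece forces the affine piece to be long. The
  same error bound gives a point where \<open>|N| \<le> 2 sup |f|\<close>, whence (iii) by the Lipschitz bound, and
  for affine \<open>f\<close> an expansion around the mean bounds \<open>\<alpha> w v\<close> below by a positive multiple of the gap
  between the two errors. Conservation turns the bound on \<open>w v\<close> into one on \<open>w\<close>.
\<close>

section \<open>Gradients and the chain rule along integral curves\<close>

lemma integral_flow_lipschitz:
  fixes g X :: "real \<Rightarrow> 'a::euclidean_space"
  assumes flow: "\<And>t. t \<in> {0..T} \<Longrightarrow> (g has_integral (X 0 - X t)) {0..t}"
    and bound: "\<And>s. s \<in> {0..T} \<Longrightarrow> norm (g s) \<le> B" and "0 \<le> B"
  shows "B-lipschitz_on {0..T} X"
proof -
  have gi: "g integrable_on {0..u}" if "u \<in> {0..T}" for u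
    using flow[OF that] by blast
  have ordered: "norm (X u - X t) \<le> B * (u - t)" if "t \<le> u" "t \<in> {0..T}" "u \<in> {0..T}" for t u
  proof -
    have "integral {0..t} g + integral {t..u} g = integral {0..u} g"
      using Henstock_Kurzweil_Integration.integral_combine[OF _ _ gi[OF \<open>u \<in> {0..T}\<close>], of t] that by auto
    moreover have "integral {0..t} g = X 0 - X t" "integral {0..u} g = X 0 - X u"
      using flow[THEN integral_unique] that by auto
    ultimately have "X t - X u = integral {t..u} g"
      by (simp add: algebra_simps)
    then have "norm (X u - X t) = norm (integral {t..u} g)"
      by (simp add: norm_minus_commute)
    also have "\<dots> \<le> integral {t..u} (\<lambda>_. B)"
      using that bound integrable_subinterval_real[OF gi[OF \<open>u \<in> {0..T}\<close>], of t u]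
      by (intro integral_norm_bound_integral) auto
    also have "\<dots> = B * (u - t)"
      using that by simp
    finally show ?thesis .
  qed
  show ?thesis
  proof (intro lipschitz_onI)
    fix u t assume "u \<in> {0..T}" "t \<in> {0..T}"
    then show "dist (X u) (X t) \<le> B * dist u t"
      using ordered[of t u] ordered[of u t] by (cases "t \<le> u") (auto simp: dist_norm norm_minus_commute)
  qed fact
qed

lemma has_derivative_zero_compose_lipschitz:
  fixes X :: "real \<Rightarrow> 'a::real_normed_vector" and \<phi> :: "'a \<Rightarrow> 'b::real_normed_vector"
  assumes \<phi>: "(\<phi> has_derivative (\<lambda>_. 0)) (at (X t))"
    and X: "B-lipschitz_on S X" and t: "t \<in> S"
  shows "((\<lambda>u. \<phi> (X u)) has_derivative (\<lambda>_. 0)) (at t within S)"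
  unfolding has_derivative_within_alt
proof (intro conjI allI impI)
  fix e :: real assume "e > 0"
  have B: "0 \<le> B"
    using X by (rule lipschitz_on_nonneg)
  then have "e / (B + 1) > 0"
    using \<open>e > 0\<close> by simp
  then obtain d where d: "d > 0"
    and small: "\<And>y. norm (y - X t) < d \<Longrightarrow> norm (\<phi> y - \<phi> (X t)) \<le> e / (B + 1) * norm (y - X t)"
    using \<phi> unfolding has_derivative_at_alt by (auto simp: diff_0_right)
  show "\<exists>d>0. \<forall>u\<in>S. norm (u - t) < d \<longrightarrow> norm (\<phi> (X u) - \<phi> (X t) - 0) \<le> e * norm (u - t)"
  proof (intro exI[of _ "d / (B + 1)"] conjI ballI impI)
    show "d / (B + 1) > 0"
      using d B by simp
    fix u assume "u \<in> S" and "norm (u - t) < d / (B + 1)"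
    have L: "norm (X u - X t) \<le> (B + 1) * norm (u - t)"
      using lipschitz_on_normD[OF X \<open>u \<in> S\<close> t] by (simp add: distrib_right)
    also have "\<dots> < d"
      using \<open>norm (u - t) < d / (B + 1)\<close> B by (simp add: field_simps)
    finally have "norm (\<phi> (X u) - \<phi> (X t)) \<le> e / (B + 1) * norm (X u - X t)"
      by (rule small)
    also have "\<dots> \<le> e / (B + 1) * ((B + 1) * norm (u - t))"
      using L \<open>e > 0\<close> B by (intro mult_left_mono) auto
    also have "\<dots> = e * norm (u - t)"
      using B by simp
    finally show "norm (\<phi> (X u) - \<phi> (X t) - 0) \<le> e * norm (u - t)"
      by simp
  qed
qed simp

lemma integrable_inner_continuous_bounded:
  fixes h g :: "real \<Rightarrow> 'a::euclidean_space"
  assumes h: "continuous_on {c..d} h" and g: "g integrable_on {c..d}"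
    and bound: "\<And>s. s \<in> {c..d} \<Longrightarrow> norm (g s) \<le> B"
  shows "(\<lambda>s. h s \<bullet> g s) integrable_on {c..d}"
proof -
  have "g absolutely_integrable_on {c..d}"
    by (rule absolutely_integrable_integrable_bound[OF bound g]) (auto intro: integrable_const_ivl)
  moreover have "bounded (h ` {c..d})"
    using compact_continuous_image[OF h] by (auto intro: compact_imp_bounded)
  moreover have "h \<in> borel_measurable (lebesgue_on {c..d})"
    using h by (rule continuous_imp_measurable_on_sets_lebesgue) auto
  ultimately have "(\<lambda>s. h s \<bullet> g s) absolutely_integrable_on {c..d}"
    by (intro absolutely_integrable_bounded_measurable_product[where h=inner]
        bilinear_conv_bounded_bilinear[THEN iffD2, OF bounded_bilinear_inner]) auto
  then show ?thesis
    by (rule set_lebesgue_integral_eq_integral(1))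
qed

lemma has_derivative_integral_frozen_inner:
  fixes H g :: "real \<Rightarrow> 'a::euclidean_space"
  assumes H: "continuous_on {c..d} H" and g: "g integrable_on {c..d}"
    and bound: "\<And>s. s \<in> {c..d} \<Longrightarrow> norm (g s) \<le> B" and t: "t \<in> {c..d}"
  shows "((\<lambda>u. integral {c..u} (\<lambda>s. (H s - H t) \<bullet> g s)) has_derivative (\<lambda>_. 0)) (at t within {c..d})"
proof -
  \<comment> \<open>\<open>g\<close> need not be continuous at \<open>t\<close>, but the integrand is, because its first factor vanishes there.\<close>
  have "((\<lambda>s. (H s - H t) \<bullet> g s) \<longlongrightarrow> 0) (at t within {c..d})"
  proof (rule Lim_null_comparison)
    show "\<forall>\<^sub>F s in at t within {c..d}. norm ((H s - H t) \<bullet> g s) \<le> norm (H s - H t) * B"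
      unfolding eventually_at_filter real_norm_def
      by (intro always_eventually allI impI order_trans[OF Cauchy_Schwarz_ineq2] mult_left_mono bound) auto
    have "(H \<longlongrightarrow> H t) (at t within {c..d})"
      using H t unfolding continuous_on_def by blast
    then show "((\<lambda>s. norm (H s - H t) * B) \<longlongrightarrow> 0) (at t within {c..d})"
      by (auto intro!: tendsto_eq_intros simp: tendsto_diff[where b = "H t", simplified])
  qed
  moreover have "(\<lambda>s. (H s - H t) \<bullet> g s) integrable_on {c..d}"
    by (intro integrable_inner_continuous_bounded[OF _ g bound] continuous_intros H)
  ultimately have "((\<lambda>u. integral {c..u} (\<lambda>s. (H s - H t) \<bullet> g s)) has_vector_derivative 0) (at t within {c..d})"
    using integral_has_vector_derivative_continuous_at[of "\<lambda>s. (H s - H t) \<bullet> g s" c d t "{}"] t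
    by (simp add: continuous_within)
  then show ?thesis
    by (simp add: has_vector_derivative_def)
qed

lemma integral_flow_chain_rule:
  fixes F :: "'a::euclidean_space \<Rightarrow> real" and DF :: "'a \<Rightarrow> 'a" and g X :: "real \<Rightarrow> 'a"
  assumes dF: "\<And>x. GDERIV F x :> DF x" and DF: "continuous_on UNIV DF"
    and flow: "\<And>t. t \<in> {0..T} \<Longrightarrow> (g has_integral (X 0 - X t)) {0..t}"
    and bound: "\<And>s. s \<in> {0..T} \<Longrightarrow> norm (g s) \<le> B" and "0 \<le> T"
  shows "(\<lambda>s. DF (X s) \<bullet> g s) integrable_on {0..T}"
    and "F (X T) - F (X 0) = - integral {0..T} (\<lambda>s. DF (X s) \<bullet> g s)"
proof -
  have "0 \<le> B"
    using order_trans[OF norm_ge_zero bound[of 0]] \<open>0 \<le> T\<close> by simp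
  then have lip: "B-lipschitz_on {0..T} X"
    using integral_flow_lipschitz[of T g X B] flow bound by blast
  have DFX: "continuous_on {0..T} (\<lambda>s. DF (X s))"
    using continuous_on_compose2[OF DF lipschitz_on_continuous_on[OF lip]] by auto
  have gi: "g integrable_on {0..u}" if "u \<in> {0..T}" for u
    using flow[OF that] by blast
  show int: "(\<lambda>s. DF (X s) \<bullet> g s) integrable_on {0..T}"
    using \<open>0 \<le> T\<close> by (intro integrable_inner_continuous_bounded[OF DFX gi bound]) auto
  define \<psi> where "\<psi> u = F (X u) + integral {0..u} (\<lambda>s. DF (X s) \<bullet> g s)" for u
  \<comment> \<open>At \<open>t\<close>, freeze the gradient at \<open>D = DF (X t)\<close>: the remainder
     \<open>F (X u) - X u \<bullet> D\<close> is flat at \<open>t\<close> because \<open>X\<close> is Lipschitz.\<close>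
  have "(\<psi> has_derivative (\<lambda>_. 0)) (at t within {0..T})" if t: "t \<in> {0..T}" for t
  proof -
    define D where "D = DF (X t)"
    define h where "h s = (DF (X s) - D) \<bullet> g s" for s
    have "((\<lambda>y. F y - y \<bullet> D) has_derivative (\<lambda>_. 0)) (at (X t))"
      using dF[of "X t"] unfolding gderiv_def D_def by (auto intro!: derivative_eq_intros)
    then have flat: "((\<lambda>u. F (X u) - X u \<bullet> D) has_derivative (\<lambda>_. 0)) (at t within {0..T})"
      by (rule has_derivative_zero_compose_lipschitz[OF _ lip t])
    have correction: "((\<lambda>u. integral {0..u} h) has_derivative (\<lambda>_. 0)) (at t within {0..T})"
      unfolding h_def D_def using \<open>0 \<le> T\<close>
      by (intro has_derivative_integral_frozen_inner[OF DFX _ bound t] gi) auto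
    have "((\<lambda>u. (F (X u) - X u \<bullet> D) + integral {0..u} h + X 0 \<bullet> D)
        has_derivative (\<lambda>_. 0)) (at t within {0..T})"
      using has_derivative_add[OF has_derivative_add[OF flat correction] has_derivative_const[of "X 0 \<bullet> D"]]
      by simp
    moreover have "\<psi> u = (F (X u) - X u \<bullet> D) + integral {0..u} h + X 0 \<bullet> D" if u: "u \<in> {0..T}" for u
    proof -
      have "((\<lambda>s. DF (X s) \<bullet> g s) has_integral integral {0..u} (\<lambda>s. DF (X s) \<bullet> g s)) {0..u}"
        using integrable_subinterval_real[OF int] u by (auto intro: integrable_integral)
      moreover have "((\<lambda>s. D \<bullet> g s) has_integral D \<bullet> (X 0 - X u)) {0..u}"
        using has_integral_linear[OF flow[OF u] bounded_linear_inner_right] by (simp add: o_def)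
      ultimately have "integral {0..u} h = integral {0..u} (\<lambda>s. DF (X s) \<bullet> g s) - D \<bullet> (X 0 - X u)"
        unfolding h_def inner_diff_left by (intro integral_unique has_integral_diff)
      then show ?thesis
        unfolding \<psi>_def by (simp add: inner_diff_right inner_commute)
    qed
    ultimately show ?thesis
      by (rule has_derivative_transform[OF t, rotated]) simp
  qed
  then obtain c where "\<forall>u\<in>{0..T}. \<psi> u = c"
    using has_derivative_zero_constant[of "{0..T}" \<psi>] by auto
  then have "\<psi> T = \<psi> 0"
    using \<open>0 \<le> T\<close> by auto
  then show "F (X T) - F (X 0) = - integral {0..T} (\<lambda>s. DF (X s) \<bullet> g s)"
    unfolding \<psi>_def by simp
qed

lemma gderiv_unique:
  fixes D D' :: "'a::real_inner"
  assumes "GDERIV F x :> D" "GDERIV F x :> D'"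
  shows "D = D'"
proof -
  have "(\<lambda>h. h \<bullet> D) = (\<lambda>h. h \<bullet> D')"
    using assms unfolding gderiv_def by (rule has_derivative_unique)
  then have "(D - D') \<bullet> (D - D') = 0"
    by (metis inner_diff_right right_minus_eq)
  then show ?thesis
    by simp
qed

lemma gderiv_integral_param:
  fixes F :: "'a::euclidean_space \<Rightarrow> real \<Rightarrow> real" and DF :: "'a \<Rightarrow> real \<Rightarrow> 'a"
  assumes F: "\<And>\<theta> x. x \<in> {a..b} \<Longrightarrow> GDERIV (\<lambda>\<theta>. F \<theta> x) \<theta> :> DF \<theta> x"
    and int: "\<And>\<theta>. F \<theta> integrable_on {a..b}"
    and DF: "continuous_on (UNIV \<times> {a..b}) (\<lambda>(\<theta>, x). DF \<theta> x)"
  shows "GDERIV (\<lambda>\<theta>. integral {a..b} (F \<theta>)) \<theta> :> integral {a..b} (DF \<theta>)"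
proof -
  have "continuous_on (UNIV \<times> cbox a b) (\<lambda>(\<theta>, x). blinfun_inner_left (DF \<theta> x))"
    using bounded_linear.continuous_on[OF bounded_linear_blinfun_inner_left DF]
    by (simp add: split_beta)
  then have "((\<lambda>\<theta>. integral (cbox a b) (F \<theta>)) has_derivative
      integral (cbox a b) (\<lambda>x. blinfun_inner_left (DF \<theta> x))) (at \<theta>)"
    using F int unfolding gderiv_def
    by (intro leibniz_rule[where U=UNIV, simplified]) auto
  moreover have "continuous_on {a..b} (DF \<theta>)"
    using continuous_on_compose2[OF DF continuous_on_Pair[OF continuous_on_const continuous_on_id]]
    by force
  then have "DF \<theta> integrable_on {a..b}"
    by (rule integrable_continuous_interval)
  then have "integral (cbox a b) (\<lambda>x. blinfun_inner_left (DF \<theta> x))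
      = blinfun_inner_left (integral {a..b} (DF \<theta>))"
    using integral_linear[OF _ bounded_linear_blinfun_inner_left] by (simp add: o_def)
  ultimately show ?thesis
    by (simp add: gderiv_def)
qed

section \<open>The one-neuron network\<close>

definition vec4 :: "real \<Rightarrow> real \<Rightarrow> real \<Rightarrow> real \<Rightarrow> real^4" where
  "vec4 p q r s = (\<chi> i. if i = 1 then p else if i = 2 then q else if i = 3 then r else s)"

lemma vec4_nth [simp]:
  "vec4 p q r s $ 1 = p" "vec4 p q r s $ 2 = q" "vec4 p q r s $ 3 = r" "vec4 p q r s $ 4 = s"
  by (simp_all add: vec4_def)

lemma sum_UNIV_4: "sum g (UNIV::4 set) = g 1 + g 2 + g 3 + g 4"
  unfolding UNIV_4 by (simp add: ac_simps)

lemma inner_real4: "(x::real^4) \<bullet> y = x$1 * y$1 + x$2 * y$2 + x$3 * y$3 + x$4 * y$4"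
  by (simp add: inner_vec_def sum_UNIV_4)

lemma norm_vec4_le: "norm (vec4 p q r s) \<le> \<bar>p\<bar> + \<bar>q\<bar> + \<bar>r\<bar> + \<bar>s\<bar>"
  using norm_le_l1_cart[of "vec4 p q r s"] by (simp add: sum_UNIV_4)

lemma continuous_on_vec4 [continuous_intros]:
  assumes "continuous_on S p" "continuous_on S q" "continuous_on S r" "continuous_on S s"
  shows "continuous_on S (\<lambda>x. vec4 (p x) (q x) (r x) (s x))"
  unfolding vec4_def apply (intro continuous_on_vec_lambda)
  subgoal for i by (cases "i = 1"; cases "i = 2"; cases "i = 3") (auto simp: assms)
  done

lemma tendsto_vec4 [tendsto_intros]:
  assumes "(p \<longlongrightarrow> p0) F" "(q \<longlongrightarrow> q0) F" "(r \<longlongrightarrow> r0) F" "(s \<longlongrightarrow> s0) F"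
  shows "((\<lambda>x. vec4 (p x) (q x) (r x) (s x)) \<longlongrightarrow> vec4 p0 q0 r0 s0) F"
  unfolding vec4_def apply (intro tendsto_vec_lambda)
  subgoal for i by (cases "i = 1"; cases "i = 2"; cases "i = 3") (auto simp: assms)
  done

definition relu :: "real \<Rightarrow> real" where
  "relu z = max z 0"

definition heaviside :: "real \<Rightarrow> real" where
  "heaviside z = indicator {0<..} z"

lemma realiz_relu: "realiz \<theta> x = \<theta>$3 * relu (\<theta>$1 * x + \<theta>$2) + \<theta>$4"
  by (simp add: realiz_def relu_def)

lemma continuous_on_realiz: "continuous_on S (realiz \<theta>)"
  unfolding realiz_def by (intro continuous_intros)

lemma relu_diff_eq_scaled: "\<exists>l\<in>{0..1}. relu u - relu v = l * (u - v)"
proof (cases "u = v")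
  case False
  have "0 \<le> (relu u - relu v) / (u - v) \<and> (relu u - relu v) / (u - v) \<le> 1"
    using False by (cases "u < v") (auto simp: relu_def divide_simps max_def)
  with False show ?thesis
    by (intro bexI[of _ "(relu u - relu v) / (u - v)"]) auto
qed auto

lemma realiz_diff_eq_scaled: "\<exists>l\<in>{0..1}. realiz \<theta> x - realiz \<theta> y = l * (\<theta>$1 * \<theta>$3) * (x - y)"
proof -
  obtain l where l: "l \<in> {0..1}"
    and eq: "relu (\<theta>$1 * x + \<theta>$2) - relu (\<theta>$1 * y + \<theta>$2) = l * (\<theta>$1 * x + \<theta>$2 - (\<theta>$1 * y + \<theta>$2))"
    using relu_diff_eq_scaled by blast
  have "realiz \<theta> x - realiz \<theta> y = \<theta>$3 * (relu (\<theta>$1 * x + \<theta>$2) - relu (\<theta>$1 * y + \<theta>$2))"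
    unfolding realiz_relu by (simp add: algebra_simps)
  also have "\<dots> = l * (\<theta>$1 * \<theta>$3) * (x - y)"
    unfolding eq by (simp add: algebra_simps)
  finally show ?thesis
    using l by blast
qed

lemma realiz_lipschitz: "\<bar>realiz \<theta> x - realiz \<theta> y\<bar> \<le> \<bar>\<theta>$1 * \<theta>$3\<bar> * \<bar>x - y\<bar>"
proof -
  obtain l where l: "l \<in> {0..1}" and eq: "realiz \<theta> x - realiz \<theta> y = l * (\<theta>$1 * \<theta>$3) * (x - y)"
    using realiz_diff_eq_scaled by blast
  have "\<bar>realiz \<theta> x - realiz \<theta> y\<bar> = l * (\<bar>\<theta>$1 * \<theta>$3\<bar> * \<bar>x - y\<bar>)"
    using l unfolding eq by (simp add: abs_mult)
  also have "\<dots> \<le> 1 * (\<bar>\<theta>$1 * \<theta>$3\<bar> * \<bar>x - y\<bar>)"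
    using l by (intro mult_right_mono) auto
  finally show ?thesis
    by simp
qed

lemma realiz_inactive: "\<theta>$1 * x + \<theta>$2 \<le> 0 \<Longrightarrow> realiz \<theta> x = \<theta>$4"
  by (simp add: realiz_def)

lemma realiz_active: "0 \<le> \<theta>$1 * x + \<theta>$2 \<Longrightarrow> realiz \<theta> x = (\<theta>$3 * \<theta>$2 + \<theta>$4) + \<theta>$1 * \<theta>$3 * x"
  by (simp add: realiz_def algebra_simps)

lemma realiz_cross_term_le:
  "\<alpha> * (realiz \<theta> x - realiz \<theta> y) * (x - y) \<le> max (\<alpha> * \<theta>$1 * \<theta>$3) 0 * (x - y)^2"
proof -
  obtain l where l: "l \<in> {0..1}" and eq: "realiz \<theta> x - realiz \<theta> y = l * (\<theta>$1 * \<theta>$3) * (x - y)"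
    using realiz_diff_eq_scaled by blast
  have "l * (\<alpha> * \<theta>$1 * \<theta>$3) \<le> max (\<alpha> * \<theta>$1 * \<theta>$3) 0"
    using l by (cases "0 \<le> \<alpha> * \<theta>$1 * \<theta>$3") (auto simp: mult_left_le_one_le mult_nonneg_nonpos)
  then have "l * (\<alpha> * \<theta>$1 * \<theta>$3) * (x - y)^2 \<le> max (\<alpha> * \<theta>$1 * \<theta>$3) 0 * (x - y)^2"
    by (rule mult_right_mono) simp
  moreover have "\<alpha> * (realiz \<theta> x - realiz \<theta> y) * (x - y) = l * (\<alpha> * \<theta>$1 * \<theta>$3) * (x - y)^2"
    unfolding eq by (simp add: power2_eq_square algebra_simps)
  ultimately show ?thesis
    by (simp only:)
qed

definition pointwise_grad ::
    "(real \<Rightarrow> real) \<Rightarrow> (real \<Rightarrow> real) \<Rightarrow> real \<Rightarrow> (real \<Rightarrow> real) \<Rightarrow> real^4 \<Rightarrow> real \<Rightarrow> real^4" where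
  "pointwise_grad R R' \<rho> f \<theta> x = (2 * \<rho> * (\<theta>$3 * R (\<theta>$1 * x + \<theta>$2) + \<theta>$4 - f x)) *\<^sub>R
     vec4 (\<theta>$3 * R' (\<theta>$1 * x + \<theta>$2) * x) (\<theta>$3 * R' (\<theta>$1 * x + \<theta>$2)) (R (\<theta>$1 * x + \<theta>$2)) 1"

lemma has_derivative_vec_nth: "((\<lambda>\<theta>::real^'n. \<theta>$i) has_derivative (\<lambda>h. h$i)) F"
  by (rule bounded_linear_imp_has_derivative) auto

lemma gderiv_pointwise_sq_err:
  assumes R: "\<And>z. (R has_real_derivative R' z) (at z)"
  shows "GDERIV (\<lambda>\<theta>. \<rho> * (\<theta>$3 * R (\<theta>$1 * x + \<theta>$2) + \<theta>$4 - f x)^2) \<theta> :> pointwise_grad R R' \<rho> f \<theta> x"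
proof -
  have "((\<lambda>\<theta>::real^4. \<theta>$1 * x + \<theta>$2) has_derivative (\<lambda>h. h$1 * x + h$2)) (at \<theta>)"
    by (intro derivative_intros has_derivative_vec_nth)
  from DERIV_compose_FDERIV[OF R this]
  have "((\<lambda>\<theta>::real^4. \<theta>$3 * R (\<theta>$1 * x + \<theta>$2) + \<theta>$4 - f x) has_derivative
     (\<lambda>h. \<theta>$3 * ((h$1 * x + h$2) * R' (\<theta>$1 * x + \<theta>$2)) + h$3 * R (\<theta>$1 * x + \<theta>$2) + h$4)) (at \<theta>)"
    by (auto intro!: derivative_eq_intros has_derivative_vec_nth simp: algebra_simps)
  from has_derivative_mult_right[OF has_derivative_power[OF this, of 2], of \<rho>]
  show ?thesis
    unfolding gderiv_def
    by (rule has_derivative_eq_rhs) (simp add: fun_eq_iff pointwise_grad_def inner_real4 algebra_simps)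
qed

lemma continuous_on_pointwise_grad:
  assumes R: "continuous_on UNIV R" and R': "continuous_on UNIV R'" and f: "continuous_on {a..b} f"
  shows "continuous_on (UNIV \<times> {a..b}) (\<lambda>(\<theta>, x). pointwise_grad R R' \<rho> f \<theta> x)"
proof -
  have z: "continuous_on (UNIV \<times> {a..b}) (\<lambda>p::(real^4) \<times> real. fst p $ 1 * snd p + fst p $ 2)"
    by (intro continuous_intros)
  have "continuous_on (UNIV \<times> {a..b}) (\<lambda>p::(real^4) \<times> real. f (snd p))"
    by (rule continuous_on_compose2[OF f continuous_on_snd]) auto
  with continuous_on_compose2[OF R z] continuous_on_compose2[OF R' z] show ?thesis
    unfolding pointwise_grad_def split_beta by (intro continuous_intros) auto
qed

lemma grad_loss_act:
  assumes R: "\<And>z. (R has_real_derivative R' z) (at z)"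
    and R': "continuous_on UNIV R'" and f: "continuous_on {a..b} f"
  shows "GDERIV (loss_act R \<rho> a b f) \<theta> :> integral {a..b} (pointwise_grad R R' \<rho> f \<theta>)"
    and "grad (loss_act R \<rho> a b f) \<theta> = integral {a..b} (pointwise_grad R R' \<rho> f \<theta>)"
proof -
  have cR: "continuous_on UNIV R"
    using R by (meson DERIV_isCont continuous_at_imp_continuous_on)
  have eq: "loss_act R \<rho> a b f = (\<lambda>\<theta>. integral {a..b} (\<lambda>x. \<rho> * (\<theta>$3 * R (\<theta>$1 * x + \<theta>$2) + \<theta>$4 - f x)^2))"
    by (simp add: fun_eq_iff loss_act_def)
  have int: "(\<lambda>x. \<rho> * (\<theta>$3 * R (\<theta>$1 * x + \<theta>$2) + \<theta>$4 - f x)^2) integrable_on {a..b}" for \<theta> :: "real^4"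
    by (intro integrable_continuous_interval continuous_intros f continuous_on_compose2[OF cR]) auto
  show gd: "GDERIV (loss_act R \<rho> a b f) \<theta> :> integral {a..b} (pointwise_grad R R' \<rho> f \<theta>)"
    unfolding eq
    by (rule gderiv_integral_param[OF gderiv_pointwise_sq_err[OF R] int continuous_on_pointwise_grad[OF cR R' f]])
  then show "grad (loss_act R \<rho> a b f) \<theta> = integral {a..b} (pointwise_grad R R' \<rho> f \<theta>)"
    unfolding grad_def using gderiv_unique by blast
qed

lemma norm_pointwise_grad_le:
  assumes \<theta>: "norm \<theta> \<le> Q" and x: "\<bar>x\<bar> \<le> T"
    and R: "\<bar>R (\<theta>$1 * x + \<theta>$2)\<bar> \<le> C" and R': "\<bar>R' (\<theta>$1 * x + \<theta>$2)\<bar> \<le> C" and f: "\<bar>f x\<bar> \<le> M"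
  shows "norm (pointwise_grad R R' \<rho> f \<theta> x) \<le> 2 * \<bar>\<rho>\<bar> * (Q * C + Q + M) * (Q * C * T + Q * C + C + 1)"
proof -
  define z where "z = \<theta>$1 * x + \<theta>$2"
  have \<theta>i: "\<bar>\<theta>$i\<bar> \<le> Q" for i
    using component_le_norm_cart[of \<theta> i] \<theta> by simp
  have "0 \<le> Q" "0 \<le> C" "0 \<le> T"
    using \<theta>i[of 1] R x by auto
  have "\<bar>\<theta>$3 * R z + \<theta>$4 - f x\<bar> \<le> \<bar>\<theta>$3\<bar> * \<bar>R z\<bar> + \<bar>\<theta>$4\<bar> + \<bar>f x\<bar>"
    by (simp add: abs_mult[symmetric])
  also have "\<dots> \<le> Q * C + Q + M"
    using \<theta>i[of 3] \<theta>i[of 4] R f \<open>0 \<le> Q\<close> unfolding z_def by (intro add_mono mult_mono) auto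
  finally have err: "\<bar>\<theta>$3 * R z + \<theta>$4 - f x\<bar> \<le> Q * C + Q + M" .
  have "norm (vec4 (\<theta>$3 * R' z * x) (\<theta>$3 * R' z) (R z) 1)
      \<le> \<bar>\<theta>$3\<bar> * \<bar>R' z\<bar> * \<bar>x\<bar> + \<bar>\<theta>$3\<bar> * \<bar>R' z\<bar> + \<bar>R z\<bar> + 1"
    using norm_vec4_le[of "\<theta>$3 * R' z * x" "\<theta>$3 * R' z" "R z" 1] by (simp add: abs_mult)
  also have "\<dots> \<le> Q * C * T + Q * C + C + 1"
    using \<theta>i[of 3] R R' x \<open>0 \<le> Q\<close> \<open>0 \<le> C\<close> unfolding z_def
    by (intro add_mono mult_mono) auto
  finally have "norm (pointwise_grad R R' \<rho> f \<theta> x)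
      \<le> 2 * \<bar>\<rho>\<bar> * \<bar>\<theta>$3 * R z + \<theta>$4 - f x\<bar> * (Q * C * T + Q * C + C + 1)"
    unfolding pointwise_grad_def z_def[symmetric] by (simp add: abs_mult mult_left_mono)
  also have "\<dots> \<le> 2 * \<bar>\<rho>\<bar> * (Q * C + Q + M) * (Q * C * T + Q * C + C + 1)"
    using err \<open>0 \<le> Q\<close> \<open>0 \<le> C\<close> \<open>0 \<le> T\<close> by (intro mult_right_mono mult_left_mono) auto
  finally show ?thesis .
qed

section \<open>Smooth approximations of the ReLU\<close>

\<comment> \<open>The hypotheses on \<open>R r\<close> are only made for \<open>r \<ge> 1\<close>, so sequences are indexed by \<open>Suc k\<close>.\<close>
locale relu_approximation =
  fixes a b \<rho> :: real and f :: "real \<Rightarrow> real" and R R' :: "nat \<Rightarrow> real \<Rightarrow> real"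
  assumes f_cont: "continuous_on {a..b} f"
    and R_deriv: "\<forall>r\<ge>1. \<forall>x. (R r has_real_derivative R' r x) (at x)"
    and R'_cont: "\<forall>r\<ge>1. continuous_on UNIV (R' r)"
    and R_lim: "\<forall>x. (\<lambda>r. \<bar>R r x - max x 0\<bar> + \<bar>R' r x - indicator {0<..} x\<bar>) \<longlonglongrightarrow> 0"
    and R_bdd: "\<forall>x. \<exists>C. \<forall>r\<ge>1. \<forall>y\<in>{-\<bar>x\<bar>..\<bar>x\<bar>}. \<bar>R r y\<bar> + \<bar>R' r y\<bar> \<le> C"
begin

lemma R_bounded: "\<exists>C. \<forall>k y. \<bar>y\<bar> \<le> Y \<longrightarrow> \<bar>R (Suc k) y\<bar> \<le> C \<and> \<bar>R' (Suc k) y\<bar> \<le> C"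
proof -
  obtain C where "\<forall>r\<ge>1. \<forall>y\<in>{-\<bar>Y\<bar>..\<bar>Y\<bar>}. \<bar>R r y\<bar> + \<bar>R' r y\<bar> \<le> C"
    using R_bdd by blast
  then have "\<bar>R (Suc k) y\<bar> \<le> C \<and> \<bar>R' (Suc k) y\<bar> \<le> C" if "\<bar>y\<bar> \<le> Y" for k y
    using that by (auto dest!: spec[of _ "Suc k"] bspec[of _ _ y])
  then show ?thesis
    by blast
qed

lemma R_tendsto: "(\<lambda>k. R (Suc k) y) \<longlonglongrightarrow> relu y" "(\<lambda>k. R' (Suc k) y) \<longlonglongrightarrow> heaviside y"
proof -
  have lim: "(\<lambda>r. \<bar>R r y - relu y\<bar> + \<bar>R' r y - heaviside y\<bar>) \<longlonglongrightarrow> 0"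
    using R_lim by (simp add: relu_def heaviside_def)
  have "(\<lambda>r. R r y - relu y) \<longlonglongrightarrow> 0" "(\<lambda>r. R' r y - heaviside y) \<longlonglongrightarrow> 0"
    by (auto intro!: Lim_null_comparison[OF _ lim] always_eventually)
  then show "(\<lambda>k. R (Suc k) y) \<longlonglongrightarrow> relu y" "(\<lambda>k. R' (Suc k) y) \<longlonglongrightarrow> heaviside y"
    by (auto intro: LIMSEQ_Suc simp: Lim_null[symmetric])
qed

lemma f_bounded: "\<exists>M. \<forall>x\<in>{a..b}. \<bar>f x\<bar> \<le> M"
  using compact_imp_bounded[OF compact_continuous_image[OF f_cont]] by (auto simp: bounded_iff)

lemma R_Suc_deriv: "(R (Suc k) has_real_derivative R' (Suc k) x) (at x)"
  and R'_Suc_cont: "continuous_on UNIV (R' (Suc k))"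
  using R_deriv R'_cont by auto

lemma R_Suc_cont: "continuous_on UNIV (R (Suc k))"
  using R_Suc_deriv by (meson DERIV_isCont continuous_at_imp_continuous_on)

lemma pointwise_grad_bounded:
  "\<exists>K. \<forall>\<theta> x. norm \<theta> \<le> Q \<longrightarrow> x \<in> {a..b} \<longrightarrow>
     (\<forall>k. norm (pointwise_grad (R (Suc k)) (R' (Suc k)) \<rho> f \<theta> x) \<le> K)
     \<and> norm (pointwise_grad relu heaviside \<rho> f \<theta> x) \<le> K"
proof -
  define T where "T = \<bar>a\<bar> + \<bar>b\<bar>"
  obtain M where M: "\<forall>x\<in>{a..b}. \<bar>f x\<bar> \<le> M"
    using f_bounded by blast
  obtain C0 where C0: "\<forall>k y. \<bar>y\<bar> \<le> Q * T + Q \<longrightarrow> \<bar>R (Suc k) y\<bar> \<le> C0 \<and> \<bar>R' (Suc k) y\<bar> \<le> C0"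
    using R_bounded by blast
  define C where "C = max C0 (Q * T + Q + 1)"
  have "\<bar>\<theta>$1 * x + \<theta>$2\<bar> \<le> Q * T + Q" if "norm \<theta> \<le> Q" "x \<in> {a..b}" for \<theta> :: "real^4" and x
  proof -
    have "\<bar>\<theta>$1 * x + \<theta>$2\<bar> \<le> \<bar>\<theta>$1\<bar> * \<bar>x\<bar> + \<bar>\<theta>$2\<bar>"
      by (metis abs_mult abs_triangle_ineq)
    also have "\<dots> \<le> Q * T + Q"
      using component_le_norm_cart[of \<theta>] that order_trans[OF norm_ge_zero that(1)] unfolding T_def
      by (intro add_mono mult_mono) (auto intro: order_trans)
    finally show ?thesis .
  qed
  then have RC: "\<bar>R (Suc k) (\<theta>$1 * x + \<theta>$2)\<bar> \<le> C" "\<bar>R' (Suc k) (\<theta>$1 * x + \<theta>$2)\<bar> \<le> C"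
    "\<bar>relu (\<theta>$1 * x + \<theta>$2)\<bar> \<le> C" "\<bar>heaviside (\<theta>$1 * x + \<theta>$2)\<bar> \<le> C"
    if "norm \<theta> \<le> Q" "x \<in> {a..b}" for \<theta> :: "real^4" and k x
  proof -
    define z where "z = \<theta>$1 * x + \<theta>$2"
    have z: "\<bar>z\<bar> \<le> Q * T + Q"
      unfolding z_def using that by fact
    then show "\<bar>R (Suc k) (\<theta>$1 * x + \<theta>$2)\<bar> \<le> C" "\<bar>R' (Suc k) (\<theta>$1 * x + \<theta>$2)\<bar> \<le> C"
      using C0 unfolding C_def z_def by (auto simp: le_max_iff_disj)
    show "\<bar>relu (\<theta>$1 * x + \<theta>$2)\<bar> \<le> C" "\<bar>heaviside (\<theta>$1 * x + \<theta>$2)\<bar> \<le> C"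
      using z unfolding C_def z_def[symmetric] relu_def heaviside_def
      by (auto simp: le_max_iff_disj indicator_def)
  qed
  have "\<bar>x\<bar> \<le> T" if "x \<in> {a..b}" for x
    using that unfolding T_def by auto
  then show ?thesis
    using M RC norm_pointwise_grad_le by meson
qed

lemma grad_loss_act_Suc:
  "GDERIV (loss_act (R (Suc k)) \<rho> a b f) \<theta> :> integral {a..b} (pointwise_grad (R (Suc k)) (R' (Suc k)) \<rho> f \<theta>)"
  "grad (loss_act (R (Suc k)) \<rho> a b f) \<theta> = integral {a..b} (pointwise_grad (R (Suc k)) (R' (Suc k)) \<rho> f \<theta>)"
  using grad_loss_act[OF R_Suc_deriv R'_Suc_cont f_cont] by blast+

lemma continuous_on_pointwise_grad_Suc:
  "continuous_on (UNIV \<times> {a..b}) (\<lambda>(\<theta>, x). pointwise_grad (R (Suc k)) (R' (Suc k)) \<rho> f \<theta> x)"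
  by (intro continuous_on_pointwise_grad R_Suc_cont R'_Suc_cont f_cont)

lemma continuous_on_grad_loss_act_Suc:
  "continuous_on UNIV (\<lambda>\<theta>. integral {a..b} (pointwise_grad (R (Suc k)) (R' (Suc k)) \<rho> f \<theta>))"
proof -
  have "continuous_on (UNIV \<times> cbox a b) (\<lambda>(\<theta>, x). pointwise_grad (R (Suc k)) (R' (Suc k)) \<rho> f \<theta> x)"
    using continuous_on_pointwise_grad_Suc by simp
  from integral_continuous_on_param[OF this] show ?thesis
    by simp
qed

lemma integrable_pointwise_grad_Suc:
  "pointwise_grad (R (Suc k)) (R' (Suc k)) \<rho> f \<theta> integrable_on {a..b}"
proof -
  have "continuous_on {a..b} (pointwise_grad (R (Suc k)) (R' (Suc k)) \<rho> f \<theta>)"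
    using continuous_on_compose2[OF continuous_on_pointwise_grad_Suc
        continuous_on_Pair[OF continuous_on_const continuous_on_id]]
    by force
  then show ?thesis
    by (rule integrable_continuous_interval)
qed

lemma tendsto_grad_loss_act:
  shows "pointwise_grad relu heaviside \<rho> f \<theta> integrable_on {a..b}"
    and "(\<lambda>k. integral {a..b} (pointwise_grad (R (Suc k)) (R' (Suc k)) \<rho> f \<theta>))
           \<longlonglongrightarrow> integral {a..b} (pointwise_grad relu heaviside \<rho> f \<theta>)"
proof -
  obtain K where K: "\<And>k x. x \<in> {a..b} \<Longrightarrow> norm (pointwise_grad (R (Suc k)) (R' (Suc k)) \<rho> f \<theta> x) \<le> K"
    using pointwise_grad_bounded[of "norm \<theta>"] by blast
  have lim: "(\<lambda>k. pointwise_grad (R (Suc k)) (R' (Suc k)) \<rho> f \<theta> x) \<longlonglongrightarrow> pointwise_grad relu heaviside \<rho> f \<theta> x" for x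
    unfolding pointwise_grad_def by (intro tendsto_intros R_tendsto)
  show "pointwise_grad relu heaviside \<rho> f \<theta> integrable_on {a..b}"
    and "(\<lambda>k. integral {a..b} (pointwise_grad (R (Suc k)) (R' (Suc k)) \<rho> f \<theta>))
           \<longlonglongrightarrow> integral {a..b} (pointwise_grad relu heaviside \<rho> f \<theta>)"
    using dominated_convergence[OF integrable_pointwise_grad_Suc integrable_const_ivl[of K a b] K lim]
    by blast+
qed

lemma grad_loss_act_Suc_bounded:
  "\<exists>K. \<forall>k \<theta>. norm \<theta> \<le> Q \<longrightarrow> norm (integral {a..b} (pointwise_grad (R (Suc k)) (R' (Suc k)) \<rho> f \<theta>)) \<le> K"
proof -
  obtain K where "\<And>\<theta> x k. norm \<theta> \<le> Q \<Longrightarrow> x \<in> {a..b} \<Longrightarrow>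
      norm (pointwise_grad (R (Suc k)) (R' (Suc k)) \<rho> f \<theta> x) \<le> K"
    using pointwise_grad_bounded[of Q] by blast
  then have "norm (integral {a..b} (pointwise_grad (R (Suc k)) (R' (Suc k)) \<rho> f \<theta>)) \<le> integral {a..b} (\<lambda>_. K)"
    if "norm \<theta> \<le> Q" for k \<theta>
    using that by (intro integral_norm_bound_integral integrable_const_ivl integrable_pointwise_grad_Suc) auto
  then show ?thesis
    by blast
qed

lemma tendsto_loss_act: "(\<lambda>k. loss_act (R (Suc k)) \<rho> a b f \<theta>) \<longlonglongrightarrow> loss \<rho> a b f \<theta>"
proof -
  define err where "err k x = (\<theta>$3 * R (Suc k) (\<theta>$1 * x + \<theta>$2) + \<theta>$4 - f x)^2" for k x
  obtain C where C: "\<And>k y. \<bar>y\<bar> \<le> \<bar>\<theta>$1\<bar> * (\<bar>a\<bar> + \<bar>b\<bar>) + \<bar>\<theta>$2\<bar> \<Longrightarrow> \<bar>R (Suc k) y\<bar> \<le> C"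
    using R_bounded by blast
  obtain M where M: "\<And>x. x \<in> {a..b} \<Longrightarrow> \<bar>f x\<bar> \<le> M"
    using f_bounded by blast
  have bound: "norm (err k x) \<le> (\<bar>\<theta>$3\<bar> * C + \<bar>\<theta>$4\<bar> + M)^2" if x: "x \<in> {a..b}" for k x
  proof -
    have "\<bar>\<theta>$1 * x + \<theta>$2\<bar> \<le> \<bar>\<theta>$1\<bar> * \<bar>x\<bar> + \<bar>\<theta>$2\<bar>"
      by (metis abs_mult abs_triangle_ineq)
    also have "\<dots> \<le> \<bar>\<theta>$1\<bar> * (\<bar>a\<bar> + \<bar>b\<bar>) + \<bar>\<theta>$2\<bar>"
      using x by (intro add_mono mult_left_mono) auto
    finally have "\<bar>R (Suc k) (\<theta>$1 * x + \<theta>$2)\<bar> \<le> C"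
      by (rule C)
    then have "\<bar>\<theta>$3\<bar> * \<bar>R (Suc k) (\<theta>$1 * x + \<theta>$2)\<bar> \<le> \<bar>\<theta>$3\<bar> * C"
      by (rule mult_left_mono) simp
    then have "\<bar>\<theta>$3 * R (Suc k) (\<theta>$1 * x + \<theta>$2)\<bar> + \<bar>\<theta>$4\<bar> + \<bar>f x\<bar> \<le> \<bar>\<theta>$3\<bar> * C + \<bar>\<theta>$4\<bar> + M"
      using M[OF x] by (simp add: abs_mult)
    then have "\<bar>\<theta>$3 * R (Suc k) (\<theta>$1 * x + \<theta>$2) + \<theta>$4 - f x\<bar> \<le> \<bar>\<theta>$3\<bar> * C + \<bar>\<theta>$4\<bar> + M"
      by linarith
    then have "\<bar>\<theta>$3 * R (Suc k) (\<theta>$1 * x + \<theta>$2) + \<theta>$4 - f x\<bar>^2 \<le> (\<bar>\<theta>$3\<bar> * C + \<bar>\<theta>$4\<bar> + M)^2"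
      by (rule power_mono) simp
    then show ?thesis
      unfolding err_def by simp
  qed
  have int: "err k integrable_on {a..b}" for k
    unfolding err_def
    by (intro integrable_continuous_interval continuous_intros f_cont
        continuous_on_compose2[OF R_Suc_cont]) auto
  have lim: "(\<lambda>k. err k x) \<longlonglongrightarrow> (realiz \<theta> x - f x)^2" for x
    unfolding err_def realiz_relu by (intro tendsto_intros R_tendsto)
  have "(\<lambda>k. integral {a..b} (err k)) \<longlonglongrightarrow> integral {a..b} (\<lambda>x. (realiz \<theta> x - f x)^2)"
    by (rule dominated_convergence(2)[OF int integrable_const_ivl bound lim])
  then show ?thesis
    unfolding loss_act_def loss_def err_def by (intro tendsto_intros)
qed

end

section \<open>The generalized gradient flow\<close>

definition balance :: "real^4 \<Rightarrow> real" where
  "balance \<theta> = (\<theta>$1)^2 + (\<theta>$2)^2 - (\<theta>$3)^2"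

definition balance_grad :: "real^4 \<Rightarrow> real^4" where
  "balance_grad \<theta> = vec4 (2 * \<theta>$1) (2 * \<theta>$2) (- 2 * \<theta>$3) 0"

lemma gderiv_balance: "GDERIV balance \<theta> :> balance_grad \<theta>"
  unfolding gderiv_def balance_def balance_grad_def
  by (rule has_derivative_eq_rhs, (rule derivative_intros has_derivative_vec_nth)+)
    (simp add: inner_real4 fun_eq_iff algebra_simps)

lemma balance_grad_orthogonal: "balance_grad \<theta> \<bullet> pointwise_grad relu heaviside \<rho> f \<theta> x = 0"
proof -
  define z where "z = \<theta>$1 * x + \<theta>$2"
  have "balance_grad \<theta> \<bullet> pointwise_grad relu heaviside \<rho> f \<theta> x
      = 4 * \<rho> * (\<theta>$3 * relu z + \<theta>$4 - f x) * \<theta>$3 * (heaviside z * z - relu z)"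
    unfolding balance_grad_def pointwise_grad_def z_def by (simp add: inner_real4 algebra_simps)
  \<comment> \<open>Euler's identity for the positively homogeneous ReLU.\<close>
  also have "heaviside z * z = relu z"
    by (simp add: heaviside_def relu_def indicator_def)
  finally show ?thesis
    by simp
qed

lemma sq_le_of_balance:
  fixes w b v :: real
  shows "w^2 \<le> max 1 (w^2 + b^2 - v^2 + \<bar>w * v\<bar>^2)"
proof (cases "\<bar>w\<bar> \<le> 1")
  case True
  then show ?thesis
    using abs_square_le_1[of w] by (simp add: le_max_iff_disj)
next
  case False
  then have "1 \<le> w^2"
    using abs_square_le_1[of w] by (simp add: abs_le_square_iff[symmetric])
  then have "1 * v^2 \<le> w^2 * v^2"
    by (rule mult_right_mono) simp
  then show ?thesis
    using zero_le_power2[of b] by (simp add: power_mult_distrib le_max_iff_disj)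
qed

locale relu_gradient_flow = relu_approximation +
  fixes G :: "real^4 \<Rightarrow> real^4" and \<Theta> :: "real \<Rightarrow> real^4"
  assumes G_def: "\<forall>\<theta>. convergent (\<lambda>r. grad (loss_act (R r) \<rho> a b f) \<theta>)
                  \<longrightarrow> G \<theta> = lim (\<lambda>r. grad (loss_act (R r) \<rho> a b f) \<theta>)"
    and G_locbdd: "\<forall>K. compact K \<longrightarrow> bounded (G ` K)"
    and Theta_cont: "continuous_on {0..} \<Theta>"
    and Theta_flow: "\<forall>t\<ge>0. ((\<lambda>s. G (\<Theta> s)) has_integral (\<Theta> 0 - \<Theta> t)) {0..t}"
begin

lemma G_eq: "G \<theta> = integral {a..b} (pointwise_grad relu heaviside \<rho> f \<theta>)"
proof -
  have "(\<lambda>k. grad (loss_act (R (Suc k)) \<rho> a b f) \<theta>) \<longlonglongrightarrow> integral {a..b} (pointwise_grad relu heaviside \<rho> f \<theta>)"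
    unfolding grad_loss_act_Suc by (rule tendsto_grad_loss_act(2))
  then have "(\<lambda>r. grad (loss_act (R r) \<rho> a b f) \<theta>) \<longlonglongrightarrow> integral {a..b} (pointwise_grad relu heaviside \<rho> f \<theta>)"
    by (rule LIMSEQ_imp_Suc)
  then show ?thesis
    using G_def limI convergent_def by metis
qed

lemma flow_integral: "t \<in> {0..T} \<Longrightarrow> ((\<lambda>s. G (\<Theta> s)) has_integral (\<Theta> 0 - \<Theta> t)) {0..t}"
  using Theta_flow by auto

lemma compact_flow_image: "compact (\<Theta> ` {0..T})"
  using continuous_on_subset[OF Theta_cont] by (intro compact_continuous_image) auto

lemma flow_bounded: "\<exists>Q. \<forall>s\<in>{0..T}. norm (\<Theta> s) \<le> Q"
  using compact_imp_bounded[OF compact_flow_image] by (auto simp: bounded_iff)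

lemma G_flow_bounded: "\<exists>B. \<forall>s\<in>{0..T}. norm (G (\<Theta> s)) \<le> B"
  using G_locbdd compact_flow_image[of T] unfolding bounded_iff by (metis image_eqI)

lemma balance_conserved:
  assumes "0 \<le> T"
  shows "balance (\<Theta> T) = balance (\<Theta> 0)"
proof -
  obtain B where "\<forall>s\<in>{0..T}. norm (G (\<Theta> s)) \<le> B"
    using G_flow_bounded by blast
  then have "balance (\<Theta> T) - balance (\<Theta> 0) = - integral {0..T} (\<lambda>s. balance_grad (\<Theta> s) \<bullet> G (\<Theta> s))"
    using assms by (intro integral_flow_chain_rule(2)[OF gderiv_balance _ flow_integral])
      (auto simp: balance_grad_def intro!: continuous_intros)
  also have "\<dots> = 0"
    using tendsto_grad_loss_act(1)
    by (simp add: G_eq integral_linear[OF _ bounded_linear_inner_right, unfolded o_def, symmetric]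
        balance_grad_orthogonal)
  finally show ?thesis
    by simp
qed

lemma loss_dissipation:
  assumes "0 \<le> T"
  shows "(\<lambda>s. G (\<Theta> s) \<bullet> G (\<Theta> s)) integrable_on {0..T}"
    and "loss \<rho> a b f (\<Theta> T) - loss \<rho> a b f (\<Theta> 0) = - integral {0..T} (\<lambda>s. G (\<Theta> s) \<bullet> G (\<Theta> s))"
proof -
  define D where "D k \<theta> = integral {a..b} (pointwise_grad (R (Suc k)) (R' (Suc k)) \<rho> f \<theta>)" for k \<theta>
  obtain B where B: "\<forall>s\<in>{0..T}. norm (G (\<Theta> s)) \<le> B"
    using G_flow_bounded by blast
  obtain Q where Q: "\<forall>s\<in>{0..T}. norm (\<Theta> s) \<le> Q"
    using flow_bounded by blast
  obtain K where K: "\<And>k \<theta>. norm \<theta> \<le> Q \<Longrightarrow> norm (D k \<theta>) \<le> K"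
    unfolding D_def using grad_loss_act_Suc_bounded[of Q] by blast
  \<comment> \<open>The chain rule holds for every smoothed loss; dominated convergence passes it to the limit.\<close>
  have chain: "loss_act (R (Suc k)) \<rho> a b f (\<Theta> T) - loss_act (R (Suc k)) \<rho> a b f (\<Theta> 0)
      = - integral {0..T} (\<lambda>s. D k (\<Theta> s) \<bullet> G (\<Theta> s))"
    and int: "(\<lambda>s. D k (\<Theta> s) \<bullet> G (\<Theta> s)) integrable_on {0..T}" for k
    using integral_flow_chain_rule[OF grad_loss_act_Suc(1) continuous_on_grad_loss_act_Suc
        flow_integral[where T=T] B[rule_format] assms] unfolding D_def by blast+
  have bound: "norm (D k (\<Theta> s) \<bullet> G (\<Theta> s)) \<le> K * B" if "s \<in> {0..T}" for k s
  proof -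
    have "norm (D k (\<Theta> s) \<bullet> G (\<Theta> s)) \<le> norm (D k (\<Theta> s)) * norm (G (\<Theta> s))"
      unfolding real_norm_def by (rule Cauchy_Schwarz_ineq2)
    also have "\<dots> \<le> K * B"
      using K Q B that order_trans[OF norm_ge_zero K[of "\<Theta> s" k]] by (intro mult_mono) auto
    finally show ?thesis .
  qed
  have lim: "(\<lambda>k. D k (\<Theta> s) \<bullet> G (\<Theta> s)) \<longlonglongrightarrow> G (\<Theta> s) \<bullet> G (\<Theta> s)" for s
    unfolding D_def G_eq by (intro tendsto_intros tendsto_grad_loss_act(2))
  note dominated = dominated_convergence[OF int integrable_const_ivl bound lim]
  show "(\<lambda>s. G (\<Theta> s) \<bullet> G (\<Theta> s)) integrable_on {0..T}"
    by (rule dominated(1))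
  have "(\<lambda>k. loss_act (R (Suc k)) \<rho> a b f (\<Theta> T) - loss_act (R (Suc k)) \<rho> a b f (\<Theta> 0))
      \<longlonglongrightarrow> - integral {0..T} (\<lambda>s. G (\<Theta> s) \<bullet> G (\<Theta> s))"
    unfolding chain by (intro tendsto_minus dominated(2))
  moreover have "(\<lambda>k. loss_act (R (Suc k)) \<rho> a b f (\<Theta> T) - loss_act (R (Suc k)) \<rho> a b f (\<Theta> 0))
      \<longlonglongrightarrow> loss \<rho> a b f (\<Theta> T) - loss \<rho> a b f (\<Theta> 0)"
    by (intro tendsto_intros tendsto_loss_act)
  ultimately show "loss \<rho> a b f (\<Theta> T) - loss \<rho> a b f (\<Theta> 0) = - integral {0..T} (\<lambda>s. G (\<Theta> s) \<bullet> G (\<Theta> s))"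
    by (rule LIMSEQ_unique[rotated])
qed

lemma loss_nonincreasing:
  assumes "0 \<le> T"
  shows "loss \<rho> a b f (\<Theta> T) \<le> loss \<rho> a b f (\<Theta> 0)"
  using loss_dissipation[OF assms] integral_nonneg[of "\<lambda>s. G (\<Theta> s) \<bullet> G (\<Theta> s)" "{0..T}"] by simp

end

section \<open>Estimates for a single network\<close>

lemma centered_moments:
  fixes p q :: real
  assumes "p \<le> q"
  shows "((\<lambda>x. x - (p + q) / 2) has_integral 0) {p..q}"
    and "((\<lambda>x. (x - (p + q) / 2)^2) has_integral (q - p)^3 / 12) {p..q}"
proof -
  define m where "m = (p + q) / 2"
  have "((\<lambda>x. x - m) has_integral ((q - m)^2 / 2 - (p - m)^2 / 2)) {p..q}"
    by (rule fundamental_theorem_of_calculus[OF assms])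
      (auto intro!: derivative_eq_intros simp: has_real_derivative_iff_has_vector_derivative[symmetric])
  moreover have "(q - m)^2 / 2 - (p - m)^2 / 2 = 0"
    unfolding m_def by (simp add: field_simps power2_eq_square)
  ultimately show "((\<lambda>x. x - (p + q) / 2) has_integral 0) {p..q}"
    unfolding m_def by simp
  have "((\<lambda>x. (x - m)^2) has_integral ((q - m)^3 / 3 - (p - m)^3 / 3)) {p..q}"
    by (rule fundamental_theorem_of_calculus[OF assms])
      (auto intro!: derivative_eq_intros
        simp: has_real_derivative_iff_has_vector_derivative[symmetric] power2_eq_square)
  moreover have "(q - m)^3 / 3 - (p - m)^3 / 3 = (q - p)^3 / 12"
    unfolding m_def by (simp add: field_simps power3_eq_cube)
  ultimately show "((\<lambda>x. (x - (p + q) / 2)^2) has_integral (q - p)^3 / 12) {p..q}"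
    unfolding m_def by simp
qed

lemma integral_affine_sq_ge:
  fixes p q c s :: real
  assumes "p \<le> q"
  shows "s^2 * (q - p)^3 / 12 \<le> integral {p..q} (\<lambda>x. (c + s * x)^2)"
proof -
  define m where "m = (p + q) / 2"
  define A where "A = c + s * m"
  have lower: "((\<lambda>x. 2 * A * s * (x - m) + s^2 * (x - m)^2) has_integral (2 * A * s * 0 + s^2 * ((q - p)^3 / 12))) {p..q}"
    unfolding m_def by (intro has_integral_add has_integral_mult_right centered_moments[OF assms])
  have sq: "((\<lambda>x. (c + s * x)^2) has_integral integral {p..q} (\<lambda>x. (c + s * x)^2)) {p..q}"
    by (intro integrable_integral integrable_continuous_interval continuous_intros)
  have "2 * A * s * 0 + s^2 * ((q - p)^3 / 12) \<le> integral {p..q} (\<lambda>x. (c + s * x)^2)"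
  proof (rule has_integral_le[OF lower sq])
    fix x
    have "(c + s * x)^2 = A^2 + (2 * A * s * (x - m) + s^2 * (x - m)^2)"
      unfolding A_def by (simp add: power2_eq_square algebra_simps)
    then show "2 * A * s * (x - m) + s^2 * (x - m)^2 \<le> (c + s * x)^2"
      by simp
  qed
  then show ?thesis
    by simp
qed

lemma slope_sq_le_of_piece_estimates:
  fixes l l' c s P M D \<epsilon> :: real
  assumes "0 \<le> l" "0 \<le> l'" "l + l' = D" "0 < D" "0 < \<epsilon>" "0 \<le> M"
    and energy: "c^2 * l + s^2 * l'^3 / 12 \<le> P" and const_error: "\<epsilon> \<le> l' * (\<bar>c\<bar> + M)^2"
  shows "s^2 \<le> 12 * P / (min (D / 2) (\<epsilon> / (4 * P / D + 2 * M^2 + 1)))^3"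
proof -
  define W where "W = 4 * P / D + 2 * M^2 + 1"
  define m where "m = min (D / 2) (\<epsilon> / W)"
  have "0 \<le> c^2 * l" "0 \<le> s^2 * l'^3 / 12"
    using \<open>0 \<le> l\<close> \<open>0 \<le> l'\<close> by simp_all
  with energy have const_energy: "c^2 * l \<le> P" and affine_energy: "s^2 * l'^3 / 12 \<le> P"
    by linarith+
  then have "0 < W"
    unfolding W_def using \<open>0 \<le> c^2 * l\<close> \<open>0 < D\<close> by (simp add: add_nonneg_pos)
  \<comment> \<open>If the constant piece is long, \<open>c\<close> is small, so \<open>c\<close> can only account for the error \<open>\<epsilon>\<close>
     of the best constant fit on a long affine piece.\<close>
  have "m \<le> l'"
  proof (cases "D / 2 \<le> l")
    case True
    have "c^2 * (D / 2) \<le> P"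
      using True const_energy by (meson mult_left_mono order_trans zero_le_power2)
    then have "c^2 \<le> 2 * P / D"
      using \<open>0 < D\<close> by (simp add: field_simps)
    moreover have "(\<bar>c\<bar> + M)^2 \<le> 2 * c^2 + 2 * M^2"
      using zero_le_power2[of "\<bar>c\<bar> - M"] by (simp add: power2_eq_square algebra_simps)
    ultimately have "(\<bar>c\<bar> + M)^2 \<le> W"
      unfolding W_def by simp
    then have "\<epsilon> \<le> l' * W"
      using const_error \<open>0 \<le> l'\<close> by (meson mult_left_mono order_trans)
    then show ?thesis
      unfolding m_def using \<open>0 < W\<close> by (simp add: min_le_iff_disj field_simps)
  next
    case False
    then show ?thesis
      unfolding m_def using assms by linarith
  qed
  moreover have "0 < m"
    unfolding m_def using \<open>0 < W\<close> \<open>0 < D\<close> \<open>0 < \<epsilon>\<close> by simp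
  ultimately have "s^2 * m^3 \<le> s^2 * l'^3"
    by (intro mult_left_mono power_mono) auto
  with affine_energy \<open>0 < m\<close> show ?thesis
    unfolding W_def[symmetric] m_def[symmetric] by (simp add: pos_le_divide_eq)
qed

locale interval_target =
  fixes a b :: real and f :: "real \<Rightarrow> real"
  assumes ab: "a < b" and f_cont: "continuous_on {a..b} f"
begin

definition mean :: real where
  "mean = (1 / (b - a)) * integral {a..b} f"

definition best_const_err :: real where
  "best_const_err = integral {a..b} (\<lambda>x. (f x - mean)^2)"

definition sq_err :: "real^4 \<Rightarrow> real" where
  "sq_err \<theta> = integral {a..b} (\<lambda>x. (realiz \<theta> x - f x)^2)"

definition sup_abs_f :: real where
  "sup_abs_f = (SUP x\<in>{a..b}. \<bar>f x\<bar>)"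

lemma sq_err_const: "integral {a..b} (\<lambda>x. (c - f x)^2) = best_const_err + (b - a) * (mean - c)^2"
proof -
  have "(f has_integral (b - a) * mean) {a..b}"
    using integrable_integral[OF integrable_continuous_interval[OF f_cont]] ab unfolding mean_def by simp
  then have "((\<lambda>x. 2 * (mean - c) * (f x - mean)) has_integral 2 * (mean - c) * ((b - a) * mean - (b - a) * mean)) {a..b}"
    using has_integral_const_real[of mean a b] ab by (intro has_integral_mult_right has_integral_diff) auto
  moreover have "((\<lambda>x. (f x - mean)^2) has_integral best_const_err) {a..b}"
    unfolding best_const_err_def
    by (intro integrable_integral integrable_continuous_interval continuous_intros f_cont)
  moreover have "((\<lambda>x. (mean - c)^2) has_integral (b - a) * (mean - c)^2) {a..b}"
    using has_integral_const_real[of "(mean - c)^2" a b] ab by simp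
  ultimately have "((\<lambda>x. (f x - mean)^2 + 2 * (mean - c) * (f x - mean) + (mean - c)^2) has_integral
      best_const_err + 0 + (b - a) * (mean - c)^2) {a..b}"
    by (intro has_integral_add) auto
  moreover have "(\<lambda>x. (f x - mean)^2 + 2 * (mean - c) * (f x - mean) + (mean - c)^2) = (\<lambda>x. (c - f x)^2)"
    by (simp add: fun_eq_iff power2_eq_square algebra_simps)
  ultimately show ?thesis
    by (simp add: integral_unique)
qed

lemma best_const_err_le: "best_const_err \<le> integral {a..b} (\<lambda>x. (c - f x)^2)"
  using sq_err_const ab by simp

lemma abs_f_bdd_above: "bdd_above ((\<lambda>x. \<bar>f x\<bar>) ` {a..b})"
  by (intro bounded_imp_bdd_above compact_imp_bounded compact_continuous_image continuous_intros f_cont) simp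

lemma abs_f_le_sup: "x \<in> {a..b} \<Longrightarrow> \<bar>f x\<bar> \<le> sup_abs_f"
  unfolding sup_abs_f_def by (rule cSUP_upper[OF _ abs_f_bdd_above])

lemma sup_abs_f_nonneg: "0 \<le> sup_abs_f"
  using abs_f_le_sup[of a] ab by force

lemma sup_abs_realiz_le:
  assumes "sq_err \<theta> < best_const_err"
  shows "bdd_above ((\<lambda>x. \<bar>realiz \<theta> x\<bar>) ` {a..b})"
    and "(SUP x\<in>{a..b}. \<bar>realiz \<theta> x\<bar>) \<le> 2 * sup_abs_f + (b - a) * \<bar>\<theta>$1 * \<theta>$3\<bar>"
proof -
  \<comment> \<open>Otherwise the zero function would fit \<open>f\<close> better than \<open>realiz \<theta>\<close>.\<close>
  have "\<exists>x0\<in>{a..b}. \<bar>realiz \<theta> x0\<bar> \<le> 2 * sup_abs_f"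
  proof (rule ccontr)
    assume "\<not> ?thesis"
    then have "\<bar>0 - f x\<bar> \<le> \<bar>realiz \<theta> x - f x\<bar>" if "x \<in> {a..b}" for x
    proof -
      have "2 * sup_abs_f < \<bar>realiz \<theta> x\<bar>"
        using \<open>\<not> _\<close> that by (auto simp: not_le)
      then show ?thesis
        using abs_f_le_sup[OF that] abs_triangle_ineq2[of "realiz \<theta> x" "f x"] by linarith
    qed
    then have "(0 - f x)^2 \<le> (realiz \<theta> x - f x)^2" if "x \<in> {a..b}" for x
      using that abs_le_square_iff by blast
    then have "integral {a..b} (\<lambda>x. (0 - f x)^2) \<le> sq_err \<theta>"
      unfolding sq_err_def
      by (intro integral_le integrable_continuous_interval continuous_intros f_cont continuous_on_realiz)
    then show False
      using best_const_err_le[of 0] assms by linarith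
  qed
  then obtain x0 where x0: "x0 \<in> {a..b}" "\<bar>realiz \<theta> x0\<bar> \<le> 2 * sup_abs_f"
    by blast
  have bound: "\<bar>realiz \<theta> x\<bar> \<le> 2 * sup_abs_f + (b - a) * \<bar>\<theta>$1 * \<theta>$3\<bar>" if "x \<in> {a..b}" for x
  proof -
    have "\<bar>\<theta>$1 * \<theta>$3\<bar> * \<bar>x - x0\<bar> \<le> \<bar>\<theta>$1 * \<theta>$3\<bar> * (b - a)"
      using that x0 by (intro mult_left_mono) auto
    then show ?thesis
      using realiz_lipschitz[of \<theta> x x0] x0(2) by (simp add: mult.commute)
  qed
  then show "bdd_above ((\<lambda>x. \<bar>realiz \<theta> x\<bar>) ` {a..b})"
    by (intro bdd_aboveI2) blast
  show "(SUP x\<in>{a..b}. \<bar>realiz \<theta> x\<bar>) \<le> 2 * sup_abs_f + (b - a) * \<bar>\<theta>$1 * \<theta>$3\<bar>"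
    using bound ab by (intro cSUP_least) auto
qed

definition energy_bound :: "real \<Rightarrow> real" where
  "energy_bound L = 2 * L + 2 * integral {a..b} (\<lambda>x. (f x)^2)"

\<comment> \<open>The bound of \<open>slope_sq_le_of_piece_estimates\<close> for the data of \<open>slope_sq_le_of_pieces\<close>.\<close>
definition slope_bound :: "real \<Rightarrow> real" where
  "slope_bound L = 12 * energy_bound L /
     (min ((b - a) / 2) ((best_const_err - L) / (4 * energy_bound L / (b - a) + 2 * sup_abs_f^2 + 1)))^3"

lemma integral_realiz_sq_le:
  "integral {a..b} (\<lambda>x. (realiz \<theta> x)^2) \<le> 2 * sq_err \<theta> + 2 * integral {a..b} (\<lambda>x. (f x)^2)"
proof -
  have "integral {a..b} (\<lambda>x. (realiz \<theta> x)^2) \<le> integral {a..b} (\<lambda>x. 2 * (realiz \<theta> x - f x)^2 + 2 * (f x)^2)"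
  proof (intro integral_le integrable_continuous_interval continuous_intros continuous_on_realiz f_cont)
    fix x
    show "(realiz \<theta> x)^2 \<le> 2 * (realiz \<theta> x - f x)^2 + 2 * (f x)^2"
      using zero_le_power2[of "realiz \<theta> x - 2 * f x"] by (simp add: power2_eq_square algebra_simps)
  qed
  also have "\<dots> = 2 * sq_err \<theta> + 2 * integral {a..b} (\<lambda>x. (f x)^2)"
  proof -
    have "(\<lambda>x. (realiz \<theta> x - f x)^2) integrable_on {a..b}" "(\<lambda>x. (f x)^2) integrable_on {a..b}"
      by (intro integrable_continuous_interval continuous_intros continuous_on_realiz f_cont)+
    from integrable_on_cmult_left[OF this(1), of 2] integrable_on_cmult_left[OF this(2), of 2]
    show ?thesis
      unfolding sq_err_def by (simp add: integral_add)
  qed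
  finally show ?thesis .
qed

lemma energy_of_two_pieces:
  assumes split: "\<And>g :: real \<Rightarrow> real. continuous_on {a..b} g \<Longrightarrow> integral {a..b} g = integral {u0..v0} g + integral {u1..v1} g"
    and "u0 \<le> v0" "u1 \<le> v1"
    and const: "\<And>x. x \<in> {u0<..<v0} \<Longrightarrow> realiz \<theta> x = c"
    and affine: "\<And>x. x \<in> {u1<..<v1} \<Longrightarrow> realiz \<theta> x = c' + s * x"
  shows "c^2 * (v0 - u0) + s^2 * (v1 - u1)^3 / 12 \<le> 2 * sq_err \<theta> + 2 * integral {a..b} (\<lambda>x. (f x)^2)"
proof -
  have "integral {u0..v0} (\<lambda>x. (realiz \<theta> x)^2) = integral {u0..v0} (\<lambda>x. c^2)"
    by (rule integral_spike[of "{u0, v0}"]) (auto simp: const)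
  moreover have "integral {u1..v1} (\<lambda>x. (realiz \<theta> x)^2) = integral {u1..v1} (\<lambda>x. (c' + s * x)^2)"
    by (rule integral_spike[of "{u1, v1}"]) (auto simp: affine)
  moreover have "continuous_on {a..b} (\<lambda>x. (realiz \<theta> x)^2)"
    by (intro continuous_intros continuous_on_realiz)
  ultimately have "integral {a..b} (\<lambda>x. (realiz \<theta> x)^2) = c^2 * (v0 - u0) + integral {u1..v1} (\<lambda>x. (c' + s * x)^2)"
    using split \<open>u0 \<le> v0\<close> by (simp add: mult.commute)
  then show ?thesis
    using integral_affine_sq_ge[OF \<open>u1 \<le> v1\<close>, of s c'] integral_realiz_sq_le[of \<theta>] by simp
qed

lemma best_const_err_le_of_two_pieces:
  assumes split: "\<And>g :: real \<Rightarrow> real. continuous_on {a..b} g \<Longrightarrow> integral {a..b} g = integral {u0..v0} g + integral {u1..v1} g"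
    and "u1 \<le> v1" "{u1..v1} \<subseteq> {a..b}"
    and const: "\<And>x. x \<in> {u0<..<v0} \<Longrightarrow> realiz \<theta> x = c"
  shows "best_const_err \<le> sq_err \<theta> + (v1 - u1) * (\<bar>c\<bar> + sup_abs_f)^2"
proof -
  have f: "continuous_on {u1..v1} f"
    using continuous_on_subset[OF f_cont] \<open>{u1..v1} \<subseteq> {a..b}\<close> .
  \<comment> \<open>On the constant piece \<open>c\<close> fits \<open>f\<close> exactly as well as the network does.\<close>
  have "integral {u0..v0} (\<lambda>x. (c - f x)^2) = integral {u0..v0} (\<lambda>x. (realiz \<theta> x - f x)^2)"
    by (rule integral_spike[of "{u0, v0}"]) (auto simp: const)
  moreover have "continuous_on {a..b} (\<lambda>x. (realiz \<theta> x - f x)^2)"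
    by (intro continuous_intros continuous_on_realiz f_cont)
  moreover have "0 \<le> integral {u1..v1} (\<lambda>x. (realiz \<theta> x - f x)^2)"
    by (intro integral_nonneg integrable_continuous_interval continuous_intros continuous_on_realiz f) auto
  ultimately have "integral {u0..v0} (\<lambda>x. (c - f x)^2) \<le> sq_err \<theta>"
    using split unfolding sq_err_def by simp
  moreover have "integral {u1..v1} (\<lambda>x. (c - f x)^2) \<le> integral {u1..v1} (\<lambda>x. (\<bar>c\<bar> + sup_abs_f)^2)"
  proof (intro integral_le integrable_continuous_interval continuous_intros f)
    fix x assume "x \<in> {u1..v1}"
    then have "\<bar>c - f x\<bar> \<le> \<bar>\<bar>c\<bar> + sup_abs_f\<bar>"
      using abs_f_le_sup \<open>{u1..v1} \<subseteq> {a..b}\<close> by fastforce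
    then show "(c - f x)^2 \<le> (\<bar>c\<bar> + sup_abs_f)^2"
      by (simp add: abs_le_square_iff)
  qed
  moreover have "best_const_err \<le> integral {u0..v0} (\<lambda>x. (c - f x)^2) + integral {u1..v1} (\<lambda>x. (c - f x)^2)"
    using best_const_err_le[of c] split[of "\<lambda>x. (c - f x)^2"] by (simp add: continuous_intros f_cont)
  ultimately show ?thesis
    using \<open>u1 \<le> v1\<close> by (simp add: mult.commute)
qed

lemma slope_sq_le_of_pieces:
  assumes split: "\<And>g :: real \<Rightarrow> real. continuous_on {a..b} g \<Longrightarrow> integral {a..b} g = integral {u0..v0} g + integral {u1..v1} g"
    and "u0 \<le> v0" "u1 \<le> v1" "{u1..v1} \<subseteq> {a..b}"
    and const: "\<And>x. x \<in> {u0<..<v0} \<Longrightarrow> realiz \<theta> x = c"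
    and affine: "\<And>x. x \<in> {u1<..<v1} \<Longrightarrow> realiz \<theta> x = c' + s * x"
    and "sq_err \<theta> \<le> L" "L < best_const_err"
  shows "s^2 \<le> slope_bound L"
  unfolding slope_bound_def
proof (rule slope_sq_le_of_piece_estimates)
  show "(v0 - u0) + (v1 - u1) = b - a"
    using split[of "\<lambda>_. 1"] ab \<open>u0 \<le> v0\<close> \<open>u1 \<le> v1\<close> by simp
  show "c^2 * (v0 - u0) + s^2 * (v1 - u1)^3 / 12 \<le> energy_bound L"
    using energy_of_two_pieces[OF split \<open>u0 \<le> v0\<close> \<open>u1 \<le> v1\<close> const affine] \<open>sq_err \<theta> \<le> L\<close>
    unfolding energy_bound_def by linarith
  show "best_const_err - L \<le> (v1 - u1) * (\<bar>c\<bar> + sup_abs_f)^2"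
    using best_const_err_le_of_two_pieces[OF split \<open>u1 \<le> v1\<close> \<open>{u1..v1} \<subseteq> {a..b}\<close> const] \<open>sq_err \<theta> \<le> L\<close>
    by linarith
qed (use assms ab sup_abs_f_nonneg in auto)

lemma slope_sq_le:
  assumes "sq_err \<theta> \<le> L" "L < best_const_err"
  shows "(\<theta>$1 * \<theta>$3)^2 \<le> slope_bound L"
proof -
  have split: "integral {a..b} g = integral {a..p} g + integral {p..b} g"
    if "continuous_on {a..b} g" "p \<in> {a..b}" for g :: "real \<Rightarrow> real" and p
    using Henstock_Kurzweil_Integration.integral_combine[OF _ _ integrable_continuous_interval[OF that(1)]] that(2) by auto
  define k where "k = - \<theta>$2 / \<theta>$1"
  define p where "p = max a (min k b)"
  have p: "p \<in> {a..b}"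
    unfolding p_def using ab by auto
  consider "\<theta>$1 = 0" | "\<theta>$1 > 0" | "\<theta>$1 < 0"
    by linarith
  then show ?thesis
  proof cases
    case 1
    \<comment> \<open>A constant network is an affine piece of slope \<open>0\<close> on all of \<open>[a, b]\<close>.\<close>
    have "(0::real)^2 \<le> slope_bound L"
      using assms 1 ab
      by (intro slope_sq_le_of_pieces[of a a a b \<theta> "\<theta>$4" "realiz \<theta> 0"]) (auto simp: realiz_def)
    with 1 show ?thesis
      by simp
  next
    case 2
    then have sign: "\<theta>$1 * x + \<theta>$2 < 0 \<longleftrightarrow> x < k" for x
      unfolding k_def by (auto simp: field_simps)
    have "\<theta>$1 * x + \<theta>$2 \<le> 0" if "x \<in> {a<..<p}" for x
      using that sign[of x] unfolding p_def by auto
    moreover have "0 \<le> \<theta>$1 * x + \<theta>$2" if "x \<in> {p<..<b}" for x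
      using that sign[of x] unfolding p_def by auto
    ultimately show ?thesis
      using assms p
      by (intro slope_sq_le_of_pieces[of a p p b \<theta> "\<theta>$4" "\<theta>$3 * \<theta>$2 + \<theta>$4"] split
          realiz_inactive realiz_active) auto
  next
    case 3
    then have sign: "\<theta>$1 * x + \<theta>$2 < 0 \<longleftrightarrow> k < x" for x
      unfolding k_def by (auto simp: field_simps)
    have "0 \<le> \<theta>$1 * x + \<theta>$2" if "x \<in> {a<..<p}" for x
      using that sign[of x] unfolding p_def by auto
    moreover have "\<theta>$1 * x + \<theta>$2 \<le> 0" if "x \<in> {p<..<b}" for x
      using that sign[of x] unfolding p_def by auto
    ultimately show ?thesis
      using assms p
      by (intro slope_sq_le_of_pieces[of p b a p \<theta> "\<theta>$4" "\<theta>$3 * \<theta>$2 + \<theta>$4"]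
          realiz_inactive realiz_active) (auto simp: split add.commute)
  qed
qed

lemma mean_affine:
  assumes "\<forall>x\<in>{a..b}. f x = \<alpha> * x + \<beta>"
  shows "mean = \<alpha> * ((a + b) / 2) + \<beta>"
proof -
  have "((\<lambda>x. \<alpha> * (x - (a + b) / 2) + (\<alpha> * ((a + b) / 2) + \<beta>)) has_integral
      (\<alpha> * 0 + (\<alpha> * ((a + b) / 2) + \<beta>) * (b - a))) {a..b}"
    using ab has_integral_const_real[of "\<alpha> * ((a + b) / 2) + \<beta>" a b]
    by (intro has_integral_add has_integral_mult_right centered_moments) (auto simp: mult.commute)
  moreover have "integral {a..b} f = integral {a..b} (\<lambda>x. \<alpha> * (x - (a + b) / 2) + (\<alpha> * ((a + b) / 2) + \<beta>))"
    using assms by (intro integral_cong) (simp add: algebra_simps)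
  ultimately show ?thesis
    unfolding mean_def using ab by (simp add: integral_unique)
qed

lemma affine_target_slope_ge:
  assumes affine: "\<forall>x\<in>{a..b}. f x = \<alpha> * x + \<beta>" and err: "sq_err \<theta> \<le> L" and L: "L < best_const_err"
  shows "6 * (best_const_err - L) / (b - a)^3 \<le> \<alpha> * \<theta>$1 * \<theta>$3"
proof -
  define m where "m = (a + b) / 2"
  define K where "K = max (\<alpha> * \<theta>$1 * \<theta>$3) 0"
  define N where "N = realiz \<theta>"
  \<comment> \<open>Expanding \<open>(N - f)\<^sup>2\<close> around the mean; the kink estimate bounds the cross term.\<close>
  have pointwise: "(f x - mean)^2 - 2 * K * (x - m)^2 - 2 * (\<alpha> * (N m - mean)) * (x - m) \<le> (N x - f x)^2"
    if "x \<in> {a..b}" for x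
  proof -
    have fx: "f x = mean + \<alpha> * (x - m)"
      using affine mean_affine[OF affine] that unfolding m_def by (simp add: algebra_simps)
    have "(N x - f x)^2 = (N x - mean)^2 - 2 * (\<alpha> * (N x - N m) * (x - m)) - 2 * (\<alpha> * (N m - mean)) * (x - m)
        + (f x - mean)^2"
      unfolding fx by (simp add: power2_eq_square algebra_simps)
    then show ?thesis
      using realiz_cross_term_le[of \<alpha> \<theta> x m] zero_le_power2[of "N x - mean"]
      unfolding N_def[symmetric] K_def[symmetric] by linarith
  qed
  have "((\<lambda>x. (f x - mean)^2 - 2 * K * (x - m)^2 - 2 * (\<alpha> * (N m - mean)) * (x - m)) has_integral
      (best_const_err - 2 * K * ((b - a)^3 / 12) - 2 * (\<alpha> * (N m - mean)) * 0)) {a..b}"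
    unfolding best_const_err_def m_def using ab
    by (intro has_integral_diff has_integral_mult_right centered_moments integrable_integral
        integrable_continuous_interval continuous_intros f_cont) auto
  moreover have "((\<lambda>x. (N x - f x)^2) has_integral sq_err \<theta>) {a..b}"
    unfolding sq_err_def N_def
    by (intro integrable_integral integrable_continuous_interval continuous_intros f_cont continuous_on_realiz)
  ultimately have "best_const_err - 2 * K * ((b - a)^3 / 12) - 2 * (\<alpha> * (N m - mean)) * 0 \<le> sq_err \<theta>"
    by (rule has_integral_le) (rule pointwise)
  then have K_ge: "6 * (best_const_err - L) / (b - a)^3 \<le> K"
    using err ab by (simp add: field_simps)
  moreover have "0 < 6 * (best_const_err - L) / (b - a)^3"
    using L ab by simp
  ultimately show ?thesis
    unfolding K_def by (auto simp: max_def split: if_splits)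
qed

end

lemma SUP_abs_le_sqrt_SUP:
  fixes x y :: "'a \<Rightarrow> real"
  assumes "S \<noteq> {}" and le: "\<And>t. t \<in> S \<Longrightarrow> (x t)^2 \<le> y t" and bound: "\<And>t. t \<in> S \<Longrightarrow> y t \<le> C"
  shows "bdd_above ((\<lambda>t. \<bar>x t\<bar>) ` S) \<and> bdd_above (y ` S) \<and> (SUP t\<in>S. \<bar>x t\<bar>) \<le> sqrt (SUP t\<in>S. y t)"
proof -
  have bdd: "bdd_above (y ` S)"
    using bound by (intro bdd_aboveI2) blast
  have x: "\<bar>x t\<bar> \<le> sqrt (SUP t\<in>S. y t)" if "t \<in> S" for t
    using le[OF that] cSUP_upper[OF that bdd] by (intro real_le_rsqrt) auto
  then have "bdd_above ((\<lambda>t. \<bar>x t\<bar>) ` S)"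
    by (intro bdd_aboveI2)
  moreover have "(SUP t\<in>S. \<bar>x t\<bar>) \<le> sqrt (SUP t\<in>S. y t)"
    using \<open>S \<noteq> {}\<close> x by (rule cSUP_least)
  ultimately show ?thesis
    using bdd by blast
qed

lemma bdd_below_INF_pos:
  fixes h :: "'a \<Rightarrow> real"
  assumes "S \<noteq> {}" "0 < \<delta>" "\<And>t. t \<in> S \<Longrightarrow> \<delta> \<le> h t"
  shows "bdd_below (h ` S) \<and> 0 < (INF t\<in>S. h t)"
  using assms by (auto intro!: bdd_belowI2 less_le_trans[OF _ cINF_greatest])

theorem lemma6p2:
  fixes a b \<rho> :: real and f :: "real \<Rightarrow> real"
    and R R' :: "nat \<Rightarrow> real \<Rightarrow> real"
    and G :: "real^4 \<Rightarrow> real^4"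
    and \<Theta> :: "real \<Rightarrow> real^4"
  assumes ab: "a < b" and rho: "\<rho> > 0"
    and f_cont: "continuous_on {a..b} f"
    and R_deriv: "\<forall>r\<ge>1. \<forall>x. (R r has_real_derivative R' r x) (at x)"
    and R'_cont: "\<forall>r\<ge>1. continuous_on UNIV (R' r)"
    and R_lim: "\<forall>x. (\<lambda>r. \<bar>R r x - max x 0\<bar> + \<bar>R' r x - indicator {0<..} x\<bar>) \<longlonglongrightarrow> 0"
    and R_bdd: "\<forall>x. \<exists>C. \<forall>r\<ge>1. \<forall>y\<in>{-\<bar>x\<bar>..\<bar>x\<bar>}. \<bar>R r y\<bar> + \<bar>R' r y\<bar> \<le> C"
    and G_def: "\<forall>\<theta>. convergent (\<lambda>r. grad (loss_act (R r) \<rho> a b f) \<theta>)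
                  \<longrightarrow> G \<theta> = lim (\<lambda>r. grad (loss_act (R r) \<rho> a b f) \<theta>)"
    and G_meas: "G \<in> borel_measurable borel"
    and G_locbdd: "\<forall>K. compact K \<longrightarrow> bounded (G ` K)"
    and Theta_cont: "continuous_on {0..} \<Theta>"
    and Theta_flow: "\<forall>t\<ge>0. ((\<lambda>s. G (\<Theta> s)) has_integral (\<Theta> 0 - \<Theta> t)) {0..t}"
    and init: "loss \<rho> a b f (\<Theta> 0) <
               \<rho> * integral {a..b} (\<lambda>x. (f x - (1 / (b - a)) * integral {a..b} f)^2)"
  shows
    "bdd_above ((\<lambda>t. \<bar>\<Theta> t $ 1 * \<Theta> t $ 3\<bar>) ` {0..})
     \<and> (bdd_above ((\<lambda>t. \<bar>\<Theta> t $ 1\<bar>) ` {0..})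
        \<and> bdd_above ((\<lambda>t. max 1 ((\<Theta> 0 $ 1)^2 + (\<Theta> 0 $ 2)^2 - (\<Theta> 0 $ 3)^2
                                    + \<bar>\<Theta> t $ 1 * \<Theta> t $ 3\<bar>^2)) ` {0..})
        \<and> (SUP t\<in>{0..}. \<bar>\<Theta> t $ 1\<bar>)
            \<le> sqrt (SUP t\<in>{0..}. max 1 ((\<Theta> 0 $ 1)^2 + (\<Theta> 0 $ 2)^2 - (\<Theta> 0 $ 3)^2
                                    + \<bar>\<Theta> t $ 1 * \<Theta> t $ 3\<bar>^2)))
     \<and> (\<forall>t\<ge>0. bdd_above ((\<lambda>x. \<bar>realiz (\<Theta> t) x\<bar>) ` {a..b})
          \<and> (SUP x\<in>{a..b}. \<bar>realiz (\<Theta> t) x\<bar>)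
             \<le> 2 * (SUP x\<in>{a..b}. \<bar>f x\<bar>) + (b - a) * \<bar>\<Theta> t $ 1 * \<Theta> t $ 3\<bar>)
     \<and> (\<forall>\<alpha> \<beta>. (\<forall>x\<in>{a..b}. f x = \<alpha> * x + \<beta>) \<longrightarrow>
          bdd_below ((\<lambda>t. \<alpha> * \<Theta> t $ 1 * \<Theta> t $ 3) ` {0..})
          \<and> (INF t\<in>{0..}. \<alpha> * \<Theta> t $ 1 * \<Theta> t $ 3) > 0)"
proof -
  interpret interval_target a b f
    using ab f_cont by unfold_locales
  interpret relu_gradient_flow a b \<rho> f R R' G \<Theta>
    using f_cont R_deriv R'_cont R_lim R_bdd G_def G_locbdd Theta_cont Theta_flow by unfold_locales
  define L where "L = sq_err (\<Theta> 0)"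
  have L: "L < best_const_err"
    using init rho unfolding L_def sq_err_def best_const_err_def mean_def loss_def by simp
  have err: "sq_err (\<Theta> t) \<le> L" if "t \<in> {0..}" for t
    using loss_nonincreasing[of t] rho that unfolding L_def sq_err_def loss_def by simp
  have slope: "\<bar>\<Theta> t $ 1 * \<Theta> t $ 3\<bar>^2 \<le> slope_bound L" if "t \<in> {0..}" for t
    using slope_sq_le[OF err[OF that] L] by simp
  have weight: "(\<Theta> t $ 1)^2 \<le> max 1 ((\<Theta> 0 $ 1)^2 + (\<Theta> 0 $ 2)^2 - (\<Theta> 0 $ 3)^2 + \<bar>\<Theta> t $ 1 * \<Theta> t $ 3\<bar>^2)"
    if "t \<in> {0..}" for t
    using sq_le_of_balance[of "\<Theta> t $ 1" "\<Theta> t $ 2" "\<Theta> t $ 3"] balance_conserved[of t] that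
    unfolding balance_def by simp
  have "bdd_above ((\<lambda>t. \<bar>\<Theta> t $ 1 * \<Theta> t $ 3\<bar>) ` {0..})"
    using slope by (intro bdd_aboveI2[where M = "sqrt (slope_bound L)"] real_le_rsqrt)
  moreover have "bdd_above ((\<lambda>t. \<bar>\<Theta> t $ 1\<bar>) ` {0..})
      \<and> bdd_above ((\<lambda>t. max 1 ((\<Theta> 0 $ 1)^2 + (\<Theta> 0 $ 2)^2 - (\<Theta> 0 $ 3)^2 + \<bar>\<Theta> t $ 1 * \<Theta> t $ 3\<bar>^2)) ` {0..})
      \<and> (SUP t\<in>{0..}. \<bar>\<Theta> t $ 1\<bar>)
          \<le> sqrt (SUP t\<in>{0..}. max 1 ((\<Theta> 0 $ 1)^2 + (\<Theta> 0 $ 2)^2 - (\<Theta> 0 $ 3)^2 + \<bar>\<Theta> t $ 1 * \<Theta> t $ 3\<bar>^2))"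
    using slope
    by (intro SUP_abs_le_sqrt_SUP[OF _ weight, where C = "max 1 ((\<Theta> 0 $ 1)^2 + (\<Theta> 0 $ 2)^2 - (\<Theta> 0 $ 3)^2 + slope_bound L)"])
      (force simp: le_max_iff_disj)+
  moreover have "\<forall>t\<ge>0. bdd_above ((\<lambda>x. \<bar>realiz (\<Theta> t) x\<bar>) ` {a..b})
      \<and> (SUP x\<in>{a..b}. \<bar>realiz (\<Theta> t) x\<bar>) \<le> 2 * (SUP x\<in>{a..b}. \<bar>f x\<bar>) + (b - a) * \<bar>\<Theta> t $ 1 * \<Theta> t $ 3\<bar>"
    using sup_abs_realiz_le[OF le_less_trans[OF err L]] unfolding sup_abs_f_def by auto
  moreover have "\<forall>\<alpha> \<beta>. (\<forall>x\<in>{a..b}. f x = \<alpha> * x + \<beta>) \<longrightarrow>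
      bdd_below ((\<lambda>t. \<alpha> * \<Theta> t $ 1 * \<Theta> t $ 3) ` {0..}) \<and> 0 < (INF t\<in>{0..}. \<alpha> * \<Theta> t $ 1 * \<Theta> t $ 3)"
    using ab L affine_target_slope_ge[OF _ err L] by (intro allI impI bdd_below_INF_pos) auto
  ultimately show ?thesis
    by blast
qed

end
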